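(* Consider a downlink system in which a base station with $N$ antennas and power budget $p>0$ serves $K$ single-antenna users through an $M$-element reconfigurable intelligent surface (RIS). For beamforming vectors $\{\mathbf{w}\}=\{\mathbf{w}_k\in\mathbb{C}^{N\times1}\}_{k=1}^K$ and an RIS matrix $\mathbf{\Phi}\in\mathbb{C}^{M\times M}$, the SINR of user $k$ is \[ \gamma_k=\frac{|\mathbf{h}_k(\mathbf{\Phi})\mathbf{w}_k|^2}{\sigma^2+\sum_{i\neq k}|\mathbf{h}_k(\mathbf{\Phi})\mathbf{w}_i|^2},\qquad \mathbf{h}_k(\mathbf{\Phi})=\mathbf{f}_k\mathbf{\Phi}\mathbf{F}, \] and its rate is $r_k=f(\gamma_k)$ with $f(\gamma)=\ln(1+\gamma)-c\sqrt{\frac{2\gamma}{1+\gamma}}$ and $c=Q^{-1}(\epsilon)/\sqrt{n}$. Let the set of feasible pairs $(\{\mathbf{w}\},\mathbf{\Phi})$ be those with $\sum_k\|\mathbf{w}_k\|^2\le p$ and $\mathbf{\Phi}\in\mathcal{E}$ (where $\mathcal{E}$ is any one of the RIS feasible sets described in the context), and assume that $\gamma_k\geq\bar{\gamma}=\frac12(\sqrt{1+2c^2}-1)$ for all $k=1,\dots,K$. Let the SINR region be the set of all achievable SINR vectors $(\gamma_1,\dots,\gamma_K)$ and the rate region be the set of all achievable rate vectors $(r_1,\dots,r_K)$ over feasible pairs. Then every point on the boundary of the rate region corresponds (via $r_k=f(\gamma_k)$ for each $k$) to a point on the boundary of the SINR region, and vice versa.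
   Context: $\mathbf{F}\in\mathbb{C}^{M\times N}$ is the base-station-to-RIS channel matrix, $\mathbf{f}_k\in\mathbb{C}^{1\times M}$ the RIS-to-user-$k$ channel, $\sigma^2>0$ the noise power, $n$ the block length and $\epsilon\in(0,1)$ the maximum tolerable decoding error probability; $Q^{-1}$ is the inverse Gaussian $Q$-function. The transmit signal is $\mathbf{x}=\sum_k\mathbf{w}_ks_k$ with i.i.d. $s_k\sim\mathcal{CN}(0,1)$, so $\mathbb{E}\{\mathbf{x}\mathbf{x}^H\}=\sum_k\mathbf{w}_k\mathbf{w}_k^H$. The RIS feasible set $\mathcal{E}$ is one of: (i) locally passive diagonal: $\mathbf{\Phi}$ diagonal with $|\phi_{mm}|=1$ for all $m$; (ii) globally passive diagonal: $\mathbf{\Phi}$ diagonal with $\mathrm{Tr}\big(\mathbf{F}\mathbb{E}\{\mathbf{x}\mathbf{x}^H\}\mathbf{F}^H(\mathbf{\Phi}^H\mathbf{\Phi}-\mathbf{I}_M)\big)\le 0$; (iii) globally passive beyond diagonal: $\mathbf{\Phi}=\mathbf{\Phi}^T$ with $\mathrm{Tr}\big(\mathbf{F}\mathbb{E}\{\mathbf{x}\mathbf{x}^H\}\mathbf{F}^H(\mathbf{\Phi}^H\mathbf{\Phi}-\mathbf{I}_M)\big)\le 0$. A point of a region in $\mathbb{R}^K$ is on its boundary if no other point of the region is componentwise at least as large with at least one component strictly larger. *)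

theory Defs
  imports "HOL-Analysis.Analysis"
begin

definition Qfun :: "real \<Rightarrow> real" where
  "Qfun x = integral {x..} (\<lambda>t. exp (- (t ^ 2) / 2)) / sqrt (2 * pi)"

definition Qinv :: "real \<Rightarrow> real" where
  "Qinv e = (THE x. Qfun x = e)"

definition cconst :: "real \<Rightarrow> nat \<Rightarrow> real" where
  "cconst e n = Qinv e / sqrt (real n)"

definition frate :: "real \<Rightarrow> real \<Rightarrow> real" where
  "frate c g = ln (1 + g) - c * sqrt (2 * g / (1 + g))"

definition gbar :: "real \<Rightarrow> real" where
  "gbar c = (sqrt (1 + 2 * c ^ 2) - 1) / 2"

definition ctrans :: "complex ^ 'b ^ 'a \<Rightarrow> complex ^ 'a ^ 'b" where
  "ctrans A = (\<chi> i j. cnj (A $ j $ i))"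

definition outer :: "complex ^ 'n \<Rightarrow> complex ^ 'n ^ 'n" where
  "outer w = (\<chi> i j. w $ i * cnj (w $ j))"

definition rowmul :: "complex ^ 'n \<Rightarrow> complex ^ 'n \<Rightarrow> complex" where
  "rowmul h w = (\<Sum>i\<in>UNIV. h $ i * w $ i)"

definition hch :: "complex ^ 'n ^ 'm \<Rightarrow> complex ^ 'm \<Rightarrow> complex ^ 'm ^ 'm \<Rightarrow> complex ^ 'n" where
  "hch F fk Phi = (fk v* Phi) v* F"

definition sinr ::
  "complex ^ 'n ^ 'm \<Rightarrow> ('k::finite \<Rightarrow> complex ^ 'm) \<Rightarrow> real \<Rightarrow>
   ('k \<Rightarrow> complex ^ 'n) \<Rightarrow> complex ^ 'm ^ 'm \<Rightarrow> 'k \<Rightarrow> real" where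
  "sinr F fs s2 W Phi k =
     (cmod (rowmul (hch F (fs k) Phi) (W k)))\<^sup>2 /
     (s2 + (\<Sum>i\<in>UNIV - {k}. (cmod (rowmul (hch F (fs k) Phi) (W i)))\<^sup>2))"

text \<open>Transmit covariance E{x x^H} = sum_k w_k w_k^H.\<close>
definition txcov :: "('k::finite \<Rightarrow> complex ^ 'n) \<Rightarrow> complex ^ 'n ^ 'n" where
  "txcov W = (\<Sum>k\<in>UNIV. outer (W k))"

datatype ris_model = LocallyPassiveDiag | GloballyPassiveDiag | GloballyPassiveBD

definition is_diag :: "complex ^ 'm ^ 'm \<Rightarrow> bool" where
  "is_diag Phi \<longleftrightarrow> (\<forall>i j. i \<noteq> j \<longrightarrow> Phi $ i $ j = 0)"

text \<open>Global passivity: Tr(F E{xx^H} F^H (Phi^H Phi - I)) \<le> 0. The trace is real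
  (product of a Hermitian PSD and a Hermitian matrix), so we compare its real part.\<close>
definition globally_passive ::
  "complex ^ 'n ^ 'm \<Rightarrow> ('k::finite \<Rightarrow> complex ^ 'n) \<Rightarrow> complex ^ 'm ^ 'm \<Rightarrow> bool" where
  "globally_passive F W Phi \<longleftrightarrow>
     Re (trace (F ** txcov W ** ctrans F ** (ctrans Phi ** Phi - mat 1))) \<le> 0"

definition ris_feasible ::
  "ris_model \<Rightarrow> complex ^ 'n ^ 'm \<Rightarrow> ('k::finite \<Rightarrow> complex ^ 'n) \<Rightarrow> complex ^ 'm ^ 'm \<Rightarrow> bool" where
  "ris_feasible md F W Phi = (case md of
       LocallyPassiveDiag \<Rightarrow> is_diag Phi \<and> (\<forall>i. cmod (Phi $ i $ i) = 1)
     | GloballyPassiveDiag \<Rightarrow> is_diag Phi \<and> globally_passive F W Phi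
     | GloballyPassiveBD \<Rightarrow> transpose Phi = Phi \<and> globally_passive F W Phi)"

text \<open>Feasible pairs, restricted to the operating regime gamma_k \<ge> gbar for all k.\<close>
definition feasible ::
  "ris_model \<Rightarrow> complex ^ 'n ^ 'm \<Rightarrow> ('k::finite \<Rightarrow> complex ^ 'm) \<Rightarrow> real \<Rightarrow> real \<Rightarrow> real \<Rightarrow>
   ('k \<Rightarrow> complex ^ 'n) \<Rightarrow> complex ^ 'm ^ 'm \<Rightarrow> bool" where
  "feasible md F fs s2 p c W Phi \<longleftrightarrow>
     (\<Sum>k\<in>UNIV. (norm (W k))\<^sup>2) \<le> p \<and> ris_feasible md F W Phi \<and>
     (\<forall>k. sinr F fs s2 W Phi k \<ge> gbar c)"

definition sinr_region ::
  "ris_model \<Rightarrow> complex ^ 'n ^ 'm \<Rightarrow> ('k::finite \<Rightarrow> complex ^ 'm) \<Rightarrow> real \<Rightarrow> real \<Rightarrow> real \<Rightarrow> (real ^ 'k) set" where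
  "sinr_region md F fs s2 p c =
     {(\<chi> k. sinr F fs s2 W Phi k) | W Phi. feasible md F fs s2 p c W Phi}"

definition rate_region ::
  "ris_model \<Rightarrow> complex ^ 'n ^ 'm \<Rightarrow> ('k::finite \<Rightarrow> complex ^ 'm) \<Rightarrow> real \<Rightarrow> real \<Rightarrow> real \<Rightarrow> (real ^ 'k) set" where
  "rate_region md F fs s2 p c =
     {(\<chi> k. frate c (sinr F fs s2 W Phi k)) | W Phi. feasible md F fs s2 p c W Phi}"

definition on_boundary :: "(real ^ 'k) set \<Rightarrow> real ^ 'k \<Rightarrow> bool" where
  "on_boundary S x \<longleftrightarrow> x \<in> S \<and>
     \<not> (\<exists>y\<in>S. (\<forall>k. x $ k \<le> y $ k) \<and> (\<exists>k. x $ k < y $ k))"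

end

theory Submission
  imports Defs
begin

text \<open>The rate map f acts coordinatewise, and f is strictly increasing on [gbar c, \<infinity>):
  its derivative is (1 - c / sqrt (2 z (1 + z))) / (1 + z), positive exactly when
  c^2 < 2 z (1 + z), i.e. when z > gbar c. Every achievable SINR lies in that range, so f
  maps the SINR region onto the rate region by an order isomorphism in each coordinate,
  and such a map preserves Pareto boundaries in both directions.\<close>

lemma frate_has_real_derivative:
  assumes z: "0 < z"
  shows "(frate c has_real_derivative (1 - c / sqrt (2 * z * (1 + z))) / (1 + z)) (at z)"
proof -
  have ratio_deriv: "((\<lambda>g. 2 * g / (1 + g)) has_real_derivative 2 / (1 + z)\<^sup>2) (at z)"
    using z by (auto intro!: derivative_eq_intros simp: field_simps power2_eq_square)
  have ratio_pos: "0 < 2 * z / (1 + z)"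
    using z by simp
  have "(frate c has_real_derivative
          1 / (1 + z) - c * (inverse (sqrt (2 * z / (1 + z))) / 2 * (2 / (1 + z)\<^sup>2))) (at z)"
    unfolding frate_def using z
    by (intro DERIV_diff DERIV_cmult DERIV_chain2[OF DERIV_real_sqrt[OF ratio_pos] ratio_deriv])
       (auto intro!: derivative_eq_intros)
  moreover have "sqrt (2 * z * (1 + z)) = (1 + z) * sqrt (2 * z / (1 + z))"
  proof -
    have "2 * z * (1 + z) = (1 + z)\<^sup>2 * (2 * z / (1 + z))"
      using z by (simp add: field_simps power2_eq_square)
    then have "sqrt (2 * z * (1 + z)) = sqrt ((1 + z)\<^sup>2) * sqrt (2 * z / (1 + z))"
      by (metis real_sqrt_mult)
    then show ?thesis
      using z by simp
  qed
  moreover have "1 / (1 + z) - c * (inverse s / 2 * (2 / (1 + z)\<^sup>2))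
      = (1 - c / ((1 + z) * s)) / (1 + z)" if "0 < s" for s
    using z that by (simp add: divide_simps power2_eq_square)
  ultimately show ?thesis
    using ratio_pos by simp
qed

lemma gbar_nonneg: "0 \<le> gbar c"
  unfolding gbar_def by simp

lemma gbar_less_imp_less_sqrt:
  assumes "gbar c < z"
  shows "c < sqrt (2 * z * (1 + z))"
proof -
  have "sqrt (1 + 2 * c\<^sup>2) < 2 * z + 1"
    using assms unfolding gbar_def by simp
  then have "(sqrt (1 + 2 * c\<^sup>2))\<^sup>2 < (2 * z + 1)\<^sup>2"
    by (intro power_strict_mono) auto
  then have "c\<^sup>2 < 2 * z * (1 + z)"
    by (simp add: algebra_simps power2_eq_square)
  then have "\<bar>c\<bar> < sqrt (2 * z * (1 + z))"
    using real_sqrt_less_mono by fastforce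
  then show ?thesis
    by linarith
qed

lemma continuous_on_frate: "continuous_on {0..} (frate c)"
  unfolding frate_def by (intro continuous_intros) auto

lemma strict_mono_on_frate: "strict_mono_on {gbar c..} (frate c)"
proof (rule strict_mono_onI)
  fix x y
  assume x: "x \<in> {gbar c..}" and "x < y"
  show "frate c x < frate c y"
  proof (rule DERIV_pos_imp_increasing_open[OF \<open>x < y\<close>])
    fix z
    assume "x < z"
    then have "gbar c < z" "0 < z"
      using x gbar_nonneg[of c] by auto
    then show "\<exists>d. (frate c has_real_derivative d) (at z) \<and> 0 < d"
      using frate_has_real_derivative gbar_less_imp_less_sqrt by fastforce
  next
    show "continuous_on {x..y} (frate c)"
      using x gbar_nonneg[of c] by (auto intro: continuous_on_subset[OF continuous_on_frate])
  qed
qed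

lemma on_boundary_coordinatewise_image_iff:
  fixes f :: "real \<Rightarrow> real" and S :: "(real ^ 'k) set"
  assumes f: "strict_mono_on A f" and S: "\<And>g k. g \<in> S \<Longrightarrow> g $ k \<in> A" and "g \<in> S"
  shows "on_boundary ((\<lambda>g. \<chi> k. f (g $ k)) ` S) (\<chi> k. f (g $ k)) \<longleftrightarrow> on_boundary S g"
proof -
  have le: "f (g $ k) \<le> f (h $ k) \<longleftrightarrow> g $ k \<le> h $ k"
    and less: "f (g $ k) < f (h $ k) \<longleftrightarrow> g $ k < h $ k" if "h \<in> S" for h k
    using strict_mono_on_less_eq[OF f] strict_mono_on_less[OF f] S \<open>g \<in> S\<close> \<open>h \<in> S\<close> by auto
  show ?thesis
    unfolding on_boundary_def using \<open>g \<in> S\<close> le less by auto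
qed

lemma rate_region_eq_image_sinr_region:
  "rate_region md F fs s2 p c = (\<lambda>g. \<chi> k. frate c (g $ k)) ` sinr_region md F fs s2 p c"
  unfolding rate_region_def sinr_region_def by (auto simp: image_iff) (metis vec_lambda_beta)+

lemma sinr_region_ge_gbar: "g \<in> sinr_region md F fs s2 p c \<Longrightarrow> gbar c \<le> g $ k"
  unfolding sinr_region_def feasible_def by auto

theorem lemma2:
  fixes F :: "complex ^ 'n ^ 'm"
    and fs :: "'k::finite \<Rightarrow> complex ^ 'm"
    and s2 p eps :: real and n :: nat and md :: ris_model
  assumes "s2 > 0" and "p > 0" and "0 < eps" and "eps < 1" and "n > 0"
  defines "c \<equiv> cconst eps n"
  shows "(\<forall>r. on_boundary (rate_region md F fs s2 p c) r \<longrightarrow>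
            (\<exists>g. on_boundary (sinr_region md F fs s2 p c) g \<and> r = (\<chi> k. frate c (g $ k))))
       \<and> (\<forall>g. on_boundary (sinr_region md F fs s2 p c) g \<longrightarrow>
            on_boundary (rate_region md F fs s2 p c) (\<chi> k. frate c (g $ k)))"
proof -
  let ?S = "sinr_region md F fs s2 p c"
  have boundary_iff:
    "on_boundary (rate_region md F fs s2 p c) (\<chi> k. frate c (g $ k)) \<longleftrightarrow> on_boundary ?S g"
    if "g \<in> ?S" for g
    unfolding rate_region_eq_image_sinr_region
    using on_boundary_coordinatewise_image_iff[OF strict_mono_on_frate _ that]
      sinr_region_ge_gbar by fastforce
  have "r \<in> (\<lambda>g. \<chi> k. frate c (g $ k)) ` ?S" if "on_boundary (rate_region md F fs s2 p c) r" for r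
    using that unfolding on_boundary_def rate_region_eq_image_sinr_region by blast
  then show ?thesis
    using boundary_iff unfolding on_boundary_def[of ?S] by blast
qed

end
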